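(* Let $\mathcal A$ be a finite set and $\pi^{\mathrm{ref}}\in\Delta(\mathcal A)$ with $\min_{a\in\mathcal A}\pi^{\mathrm{ref}}(a)=\alpha>0$. Then the map $\pi\mapsto\mathrm{KL}(\pi^{\mathrm{ref}}\|\pi)$, viewed as a map from the relative interior $\mathrm{ri}(\Delta(\mathcal A))$ to $\mathbb R_+$, is $\Theta(\alpha)$-strongly convex with respect to the $L^1$ distance.
   Context: $\mathrm{KL}(P\|Q)=\sum_aP(a)\log(P(a)/Q(a))$. $\mathrm{ri}(\Delta(\mathcal A))$ is the set of probability vectors with all entries strictly positive. $\Theta(\alpha)$ means the strong convexity modulus is a constant multiple of $\alpha$ (absolute constant). *)

theory Defs
  imports Complex_Main
begin

text \<open>Probability simplex over a finite carrier A (distributions as functions, values off A irrelevant).\<close>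
definition prob_simplex :: "'a set \<Rightarrow> ('a \<Rightarrow> real) \<Rightarrow> bool" where
  "prob_simplex A p \<longleftrightarrow> (\<forall>a\<in>A. 0 \<le> p a) \<and> sum p A = 1"

definition ri_simplex :: "'a set \<Rightarrow> ('a \<Rightarrow> real) set" where
  "ri_simplex A = {p. (\<forall>a\<in>A. 0 < p a) \<and> sum p A = 1}"

definition KL :: "'a set \<Rightarrow> ('a \<Rightarrow> real) \<Rightarrow> ('a \<Rightarrow> real) \<Rightarrow> real" where
  "KL A P Q = (\<Sum>a\<in>A. P a * ln (P a / Q a))"

definition L1_dist :: "'a set \<Rightarrow> ('a \<Rightarrow> real) \<Rightarrow> ('a \<Rightarrow> real) \<Rightarrow> real" where
  "L1_dist A p q = (\<Sum>a\<in>A. \<bar>p a - q a\<bar>)"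

definition strongly_convex_wrt ::
  "('a \<Rightarrow> real) set \<Rightarrow> (('a \<Rightarrow> real) \<Rightarrow> real) \<Rightarrow> real
     \<Rightarrow> (('a \<Rightarrow> real) \<Rightarrow> ('a \<Rightarrow> real) \<Rightarrow> real) \<Rightarrow> bool" where
  "strongly_convex_wrt S f mu d \<longleftrightarrow>
     (\<forall>x\<in>S. \<forall>y\<in>S. \<forall>t::real. 0 \<le> t \<and> t \<le> 1 \<longrightarrow>
        f (\<lambda>a. t * x a + (1 - t) * y a)
          \<le> t * f x + (1 - t) * f y - mu / 2 * t * (1 - t) * (d x y)\<^sup>2)"

end

theory Submission
  imports Defs "HOL-Analysis.Analysis"
begin

text \<open>On \<open>(0, M]\<close> the second derivative \<open>1/s\<^sup>2\<close> of \<open>-ln s\<close> is at least \<open>1/M\<^sup>2\<close>, so each summand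
  \<open>\<pi>\<^sup>r\<^sup>e\<^sup>f(a) (-ln \<pi>(a))\<close> of the KL divergence is strongly convex in \<open>\<pi>(a)\<close> with modulus
  \<open>\<pi>\<^sup>r\<^sup>e\<^sup>f(a)/M\<^sub>a\<^sup>2 \<ge> \<alpha>/M\<^sub>a\<^sup>2\<close>, where \<open>M\<^sub>a\<close> bounds both endpoints.  Taking \<open>M\<^sub>a = max (x a) (y a)\<close>,
  Cauchy-Schwarz gives \<open>\<parallel>x - y\<parallel>\<^sub>1\<^sup>2 \<le> (\<Sum>\<^sub>a M\<^sub>a\<^sup>2) \<Sum>\<^sub>a (x a - y a)\<^sup>2/M\<^sub>a\<^sup>2\<close>, and
  \<open>\<Sum>\<^sub>a M\<^sub>a\<^sup>2 \<le> \<Sum>\<^sub>a (x a + y a) = 2\<close> on the simplex; hence the modulus \<open>\<alpha>/2\<close>.\<close>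

lemma convex_on_neg_ln_minus_square:
  fixes M :: real
  assumes "M > 0"
  shows "convex_on {0<..M} (\<lambda>s. - ln s - s\<^sup>2 / (2 * M\<^sup>2))"
proof (rule convex_on_realI[where f' = "\<lambda>s. - 1 / s - s / M\<^sup>2"])
  show "connected {0<..M}" by simp
  fix x assume "x \<in> {0<..M}"
  then show "((\<lambda>s. - ln s - s\<^sup>2 / (2 * M\<^sup>2)) has_real_derivative - 1 / x - x / M\<^sup>2) (at x)"
    using assms by (auto intro!: derivative_eq_intros simp: field_simps power2_eq_square)
next
  fix x y :: real assume x: "x \<in> {0<..M}" and y: "y \<in> {0<..M}" and "x \<le> y"
  have "x * y \<le> M\<^sup>2" using x y by (simp add: power2_eq_square mult_mono)
  then have "(y - x) / M\<^sup>2 \<le> (y - x) / (x * y)"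
    using x y \<open>x \<le> y\<close> by (intro divide_left_mono) auto
  also have "\<dots> = 1 / x - 1 / y" using x y by (simp add: field_simps)
  finally show "- 1 / x - x / M\<^sup>2 \<le> - 1 / y - y / M\<^sup>2" by (simp add: diff_divide_distrib)
qed

lemma ln_convex_combination_gap:
  fixes M x y t :: real
  assumes "0 < x" "x \<le> M" "0 < y" "y \<le> M" "0 \<le> t" "t \<le> 1"
  shows "t * ln x + (1 - t) * ln y \<le> ln (t * x + (1 - t) * y) - t * (1 - t) * (x - y)\<^sup>2 / (2 * M\<^sup>2)"
proof -
  define z where "z = t * x + (1 - t) * y"
  define q where "q u = u\<^sup>2 / (2 * M\<^sup>2)" for u :: real
  have "M > 0" using assms by linarith
  have "- ln z - q z \<le> (1 - t) * (- ln y - q y) + t * (- ln x - q x)"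
    using convex_onD[OF convex_on_neg_ln_minus_square[OF \<open>M > 0\<close>], of t y x] assms
    by (simp add: z_def q_def algebra_simps)
  moreover have "t * (1 - t) * (x - y)\<^sup>2 / (2 * M\<^sup>2) = t * q x + (1 - t) * q y - q z"
  proof -
    have "t * (1 - t) * (x - y)\<^sup>2 = t * x\<^sup>2 + (1 - t) * y\<^sup>2 - z\<^sup>2"
      by (simp add: z_def algebra_simps power2_eq_square)
    then show ?thesis by (simp add: q_def add_divide_distrib diff_divide_distrib)
  qed
  ultimately show ?thesis
    unfolding z_def[symmetric] by (simp add: algebra_simps)
qed

lemma weighted_ln_ratio_convex_combination_gap:
  fixes p x y t :: real
  assumes "0 \<le> p" "0 < x" "0 < y" "0 \<le> t" "t \<le> 1"
  shows "p * ln (p / (t * x + (1 - t) * y))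
    \<le> t * (p * ln (p / x)) + (1 - t) * (p * ln (p / y))
       - p * t * (1 - t) * (x - y)\<^sup>2 / (2 * (max x y)\<^sup>2)"
proof (cases "p = 0")
  case False
  then have "p > 0" using assms by simp
  have "0 < t * x + (1 - t) * y"
    using assms by (cases "t = 0") (auto intro: add_pos_nonneg add_nonneg_pos)
  moreover have "p * (t * ln x + (1 - t) * ln y)
      \<le> p * (ln (t * x + (1 - t) * y) - t * (1 - t) * (x - y)\<^sup>2 / (2 * (max x y)\<^sup>2))"
    using assms by (intro mult_left_mono ln_convex_combination_gap) auto
  ultimately show ?thesis
    using \<open>p > 0\<close> assms by (simp add: ln_div algebra_simps)
qed simp

lemma KL_convex_combination_gap:
  assumes "\<forall>a\<in>A. 0 \<le> P a" "\<forall>a\<in>A. 0 < x a" "\<forall>a\<in>A. 0 < y a" "0 \<le> t" "t \<le> 1"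
  shows "KL A P (\<lambda>a. t * x a + (1 - t) * y a)
    \<le> t * KL A P x + (1 - t) * KL A P y
       - t * (1 - t) / 2 * (\<Sum>a\<in>A. P a * ((x a - y a)\<^sup>2 / (max (x a) (y a))\<^sup>2))"
proof -
  have "KL A P (\<lambda>a. t * x a + (1 - t) * y a)
      \<le> (\<Sum>a\<in>A. t * (P a * ln (P a / x a)) + (1 - t) * (P a * ln (P a / y a))
           - P a * t * (1 - t) * (x a - y a)\<^sup>2 / (2 * (max (x a) (y a))\<^sup>2))"
    unfolding KL_def using assms
    by (intro sum_mono weighted_ln_ratio_convex_combination_gap) auto
  also have "\<dots> = t * KL A P x + (1 - t) * KL A P y
       - t * (1 - t) / 2 * (\<Sum>a\<in>A. P a * ((x a - y a)\<^sup>2 / (max (x a) (y a))\<^sup>2))"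
    by (simp add: KL_def sum.distrib sum_subtractf sum_distrib_left sum_divide_distrib algebra_simps)
  finally show ?thesis .
qed

lemma ri_simplex_le_one:
  assumes "finite A" "p \<in> ri_simplex A" "a \<in> A"
  shows "p a \<le> 1"
  using assms member_le_sum[of a A p] by (auto simp: ri_simplex_def less_imp_le)

lemma L1_dist_sq_le_relative_sq_sum:
  assumes "finite A" "x \<in> ri_simplex A" "y \<in> ri_simplex A"
  shows "(L1_dist A x y)\<^sup>2 \<le> 2 * (\<Sum>a\<in>A. (x a - y a)\<^sup>2 / (max (x a) (y a))\<^sup>2)"
proof -
  define M where "M a = max (x a) (y a)" for a
  have pos: "0 < x a" "0 < y a" "0 < M a" if "a \<in> A" for a
    using assms that by (auto simp: ri_simplex_def M_def less_max_iff_disj)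
  have "L1_dist A x y = (\<Sum>a\<in>A. M a * (\<bar>x a - y a\<bar> / M a))"
    unfolding L1_dist_def by (intro sum.cong) (auto dest: pos)
  then have "(L1_dist A x y)\<^sup>2 \<le> (\<Sum>a\<in>A. (M a)\<^sup>2) * (\<Sum>a\<in>A. (x a - y a)\<^sup>2 / (M a)\<^sup>2)"
    using Cauchy_Schwarz_ineq_sum[of M "\<lambda>a. \<bar>x a - y a\<bar> / M a" A] by (simp add: power_divide)
  also have "\<dots> \<le> 2 * (\<Sum>a\<in>A. (x a - y a)\<^sup>2 / (M a)\<^sup>2)"
  proof (rule mult_right_mono)
    have "(\<Sum>a\<in>A. (M a)\<^sup>2) \<le> (\<Sum>a\<in>A. x a + y a)"
    proof (rule sum_mono)
      fix a assume "a \<in> A"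
      then have "x a \<le> 1" "y a \<le> 1"
        using ri_simplex_le_one[OF assms(1,2)] ri_simplex_le_one[OF assms(1,3)] by auto
      then have "(x a)\<^sup>2 \<le> x a" "(y a)\<^sup>2 \<le> y a"
        using pos[OF \<open>a \<in> A\<close>] by (auto simp: power2_eq_square mult_le_cancel_left1)
      then show "(M a)\<^sup>2 \<le> x a + y a" using pos[OF \<open>a \<in> A\<close>] by (auto simp: M_def max_def)
    qed
    also have "\<dots> = 2" using assms by (simp add: sum.distrib ri_simplex_def)
    finally show "(\<Sum>a\<in>A. (M a)\<^sup>2) \<le> 2" .
  qed (auto intro: sum_nonneg)
  finally show ?thesis by (simp only: M_def)
qed

lemma KL_strongly_convex_ri_simplex:
  assumes "finite A" "0 \<le> \<alpha>" "\<forall>a\<in>A. \<alpha> \<le> P a"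
  shows "strongly_convex_wrt (ri_simplex A) (KL A P) (\<alpha> / 2) (L1_dist A)"
  unfolding strongly_convex_wrt_def
proof (intro ballI allI impI)
  fix x y :: "'a \<Rightarrow> real" and t :: real
  assume x: "x \<in> ri_simplex A" and y: "y \<in> ri_simplex A" and t: "0 \<le> t \<and> t \<le> 1"
  define S where "S = (\<Sum>a\<in>A. (x a - y a)\<^sup>2 / (max (x a) (y a))\<^sup>2)"
  have "\<alpha> * (L1_dist A x y)\<^sup>2 \<le> \<alpha> * (2 * S)"
    using L1_dist_sq_le_relative_sq_sum[OF \<open>finite A\<close> x y] \<open>0 \<le> \<alpha>\<close>
    unfolding S_def by (rule mult_left_mono)
  then have "\<alpha> / 2 * (L1_dist A x y)\<^sup>2 \<le> \<alpha> * S" by simp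
  also have "\<dots> \<le> (\<Sum>a\<in>A. P a * ((x a - y a)\<^sup>2 / (max (x a) (y a))\<^sup>2))"
    unfolding S_def sum_distrib_left using assms(3) by (intro sum_mono mult_right_mono) auto
  finally have "t * (1 - t) / 2 * (\<alpha> / 2 * (L1_dist A x y)\<^sup>2)
      \<le> t * (1 - t) / 2 * (\<Sum>a\<in>A. P a * ((x a - y a)\<^sup>2 / (max (x a) (y a))\<^sup>2))"
    using t by (intro mult_left_mono) auto
  moreover have "KL A P (\<lambda>a. t * x a + (1 - t) * y a)
      \<le> t * KL A P x + (1 - t) * KL A P y
         - t * (1 - t) / 2 * (\<Sum>a\<in>A. P a * ((x a - y a)\<^sup>2 / (max (x a) (y a))\<^sup>2))"
    using assms x y t by (intro KL_convex_combination_gap) (auto simp: ri_simplex_def)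
  moreover have "\<alpha> / 2 / 2 * t * (1 - t) * (L1_dist A x y)\<^sup>2
      = t * (1 - t) / 2 * (\<alpha> / 2 * (L1_dist A x y)\<^sup>2)"
    by simp
  ultimately show "KL A P (\<lambda>a. t * x a + (1 - t) * y a)
      \<le> t * KL A P x + (1 - t) * KL A P y - \<alpha> / 2 / 2 * t * (1 - t) * (L1_dist A x y)\<^sup>2"
    by linarith
qed

theorem lemma5p1:
  shows "\<exists>c::real. c > 0 \<and>
    (\<forall>(A::nat set) (pref::nat \<Rightarrow> real).
       finite A \<and> A \<noteq> {} \<and> prob_simplex A pref \<and> Min (pref ` A) > 0 \<longrightarrow>
       strongly_convex_wrt (ri_simplex A) (\<lambda>p. KL A pref p)
         (c * Min (pref ` A)) (L1_dist A))"
proof (intro exI[of _ "1/2"] conjI allI impI)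
  fix A :: "nat set" and pref :: "nat \<Rightarrow> real"
  assume "finite A \<and> A \<noteq> {} \<and> prob_simplex A pref \<and> Min (pref ` A) > 0"
  then have "finite A" "0 < Min (pref ` A)" by simp_all
  then have "strongly_convex_wrt (ri_simplex A) (KL A pref) (Min (pref ` A) / 2) (L1_dist A)"
    by (intro KL_strongly_convex_ri_simplex) auto
  then show "strongly_convex_wrt (ri_simplex A) (\<lambda>p. KL A pref p) (1/2 * Min (pref ` A)) (L1_dist A)"
    by simp
qed simp

end
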